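(* Let $\mathfrak{S}=(\mathcal{X},\mathsf{S},\gamma,(\Lambda_{a})_{a\in\mathcal{A}})$ be a spectral decomposition system for the Euclidean space $\mathfrak{H}$ with spectral-induced ordering mapping $\tau$, and let $\varphi\colon\mathcal{X}\to[-\infty,+\infty]$. Then: (i) $\varphi$ is $\mathsf{S}$-invariant $\Leftrightarrow$ $\varphi\circ\tau=\varphi$ $\Leftrightarrow$ $\varphi\circ\gamma\circ\Lambda_a=\varphi$ for every $a\in\mathcal{A}$; (ii) if $\varphi$ is $\mathsf{S}$-invariant, then $\operatorname{int}\operatorname{dom}(\varphi\circ\gamma)=\gamma^{-1}(\operatorname{int}\operatorname{dom}\varphi)$.
   Context: A Euclidean space is a finite-dimensional real inner product space; inner products are written $\langle\cdot,\cdot\rangle$ and norms $\|\cdot\|$. Let $\mathfrak{H}$ and $\mathcal{X}$ be Euclidean spaces, let $\mathsf{S}$ be a group acting on $\mathcal{X}$ by linear isometries, let $\gamma\colon\mathfrak{H}\to\mathcal{X}$, and let $(\Lambda_a)_{a\in\mathcal{A}}$ be a family of linear operators from $\mathcal{X}$ to $\mathfrak{H}$. The orbit of $x$ is $\mathsf{S}\cdot x=\{s\cdot x: s\in\mathsf{S}\}$; a map $f$ on $\mathcal{X}$ is $\mathsf{S}$-invariant if $f(s\cdot x)=f(x)$ for all $s,x$. The tuple is a spectral decomposition system for $\mathfrak{H}$ if: [A] every $\Lambda_a$ is an isometry; [B] there exists an $\mathsf{S}$-invariant $\tau\colon\mathcal{X}\to\mathcal{X}$ with $\tau(x)\in\mathsf{S}\cdot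 x$ for all $x$ and $\gamma\circ\Lambda_a=\tau$ for all $a$; [C] for every $X\in\mathfrak{H}$ there is $a$ with $X=\Lambda_a\gamma(X)$; [D] $\langle X,Y\rangle\leq\langle\gamma(X),\gamma(Y)\rangle$ for all $X,Y\in\mathfrak{H}$. The map $\tau$ in [B] is the spectral-induced ordering mapping. $\operatorname{dom}f=\{x: f(x)<+\infty\}$ and $\operatorname{int}$ denotes interior. *)

theory Defs
  imports "HOL-Analysis.Analysis" "HOL-Algebra.Group"
begin

definition linear_isometry_action ::
  "('g, 'm) monoid_scheme \<Rightarrow> ('g \<Rightarrow> 'x::euclidean_space \<Rightarrow> 'x) \<Rightarrow> bool" where
  "linear_isometry_action G act \<longleftrightarrow>
     group G \<and>
     (\<forall>x. act \<one>\<^bsub>G\<^esub> x = x) \<and>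
     (\<forall>g\<in>carrier G. \<forall>h\<in>carrier G. \<forall>x. act (g \<otimes>\<^bsub>G\<^esub> h) x = act g (act h x)) \<and>
     (\<forall>g\<in>carrier G. linear (act g) \<and> (\<forall>x. norm (act g x) = norm x))"

definition orbit :: "('g, 'm) monoid_scheme \<Rightarrow> ('g \<Rightarrow> 'x \<Rightarrow> 'x) \<Rightarrow> 'x \<Rightarrow> 'x set" where
  "orbit G act x = {act s x | s. s \<in> carrier G}"

definition invariant_under :: "('g, 'm) monoid_scheme \<Rightarrow> ('g \<Rightarrow> 'x \<Rightarrow> 'x) \<Rightarrow> ('x \<Rightarrow> 'b) \<Rightarrow> bool" where
  "invariant_under G act f \<longleftrightarrow> (\<forall>s\<in>carrier G. \<forall>x. f (act s x) = f x)"

definition lin_isometry :: "('x::euclidean_space \<Rightarrow> 'h::euclidean_space) \<Rightarrow> bool" where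
  "lin_isometry L \<longleftrightarrow> linear L \<and> (\<forall>x. norm (L x) = norm x)"

definition spectral_decomposition_system ::
  "('g, 'm) monoid_scheme \<Rightarrow> ('g \<Rightarrow> 'x::euclidean_space \<Rightarrow> 'x) \<Rightarrow> ('h::euclidean_space \<Rightarrow> 'x)
   \<Rightarrow> 'a set \<Rightarrow> ('a \<Rightarrow> 'x \<Rightarrow> 'h) \<Rightarrow> ('x \<Rightarrow> 'x) \<Rightarrow> bool" where
  "spectral_decomposition_system G act \<gamma> A \<Lambda> \<tau> \<longleftrightarrow>
     linear_isometry_action G act \<and>
     (\<forall>a\<in>A. lin_isometry (\<Lambda> a)) \<and>
     invariant_under G act \<tau> \<and> (\<forall>x. \<tau> x \<in> orbit G act x) \<and> (\<forall>a\<in>A. \<gamma> \<circ> \<Lambda> a = \<tau>) \<and>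
     (\<forall>X. \<exists>a\<in>A. X = \<Lambda> a (\<gamma> X)) \<and>
     (\<forall>X Y. inner X Y \<le> inner (\<gamma> X) (\<gamma> Y))"

definition edom :: "('x \<Rightarrow> ereal) \<Rightarrow> 'x set" where
  "edom f = {x. f x < \<infinity>}"

end

theory Submission
  imports Defs
begin

text \<open>Part (i) only uses that \<open>\<tau>\<close> is invariant and picks a point of each orbit, together
  with \<open>\<gamma> \<circ> \<Lambda> a = \<tau>\<close>. For (ii), [A], [C] and [D] make \<open>\<gamma>\<close> norm preserving and nonexpansive,
  hence continuous, which gives one inclusion. For the other, each \<open>\<Lambda> a\<close> with
  \<open>X = \<Lambda> a (\<gamma> X)\<close> is a continuous section of \<open>\<gamma>\<close> through \<open>X\<close>, and the preimage of
  \<open>edom (\<phi> \<circ> \<gamma>)\<close> under it is \<open>edom (\<phi> \<circ> \<tau>) = edom \<phi>\<close>; so a neighbourhood of \<open>X\<close> inside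
  \<open>edom (\<phi> \<circ> \<gamma>)\<close> is pulled back to a neighbourhood of \<open>\<gamma> X\<close> inside \<open>edom \<phi>\<close>.\<close>

lemma continuous_vimage_interior_subset:
  assumes "continuous_on UNIV f"
  shows "f -` interior S \<subseteq> interior (f -` S)"
proof (rule interior_maximal)
  show "f -` interior S \<subseteq> f -` S"
    using interior_subset by blast
  show "open (f -` interior S)"
    using assms open_vimage by blast
qed

lemma interior_vimage_subset_if_continuous_sections:
  assumes "\<And>x. \<exists>g. continuous_on UNIV g \<and> g (f x) = x \<and> g -` f -` S \<subseteq> S"
  shows "interior (f -` S) \<subseteq> f -` interior S"
proof
  fix x assume x: "x \<in> interior (f -` S)"
  obtain g where g: "continuous_on UNIV g" "g (f x) = x" "g -` f -` S \<subseteq> S"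
    using assms by blast
  have "f x \<in> g -` interior (f -` S)"
    using x g(2) by simp
  also have "\<dots> \<subseteq> interior (g -` f -` S)"
    using continuous_vimage_interior_subset[OF g(1)] .
  also have "\<dots> \<subseteq> interior S"
    using g(3) by (rule interior_mono)
  finally show "x \<in> f -` interior S"
    by simp
qed

lemma dist_le_if_norm_eq_and_inner_le:
  fixes f :: "'a::real_inner \<Rightarrow> 'b::real_inner"
  assumes "\<And>x. norm (f x) = norm x" and "\<And>x y. inner x y \<le> inner (f x) (f y)"
  shows "dist (f x) (f y) \<le> dist x y"
proof -
  have "(dist (f x) (f y))\<^sup>2 = (norm (f x))\<^sup>2 + (norm (f y))\<^sup>2 - 2 * inner (f x) (f y)"
    by (simp add: dist_norm power2_norm_eq_inner inner_diff_left inner_diff_right inner_commute)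
  also have "\<dots> \<le> (norm x)\<^sup>2 + (norm y)\<^sup>2 - 2 * inner x y"
    using assms by simp
  also have "\<dots> = (dist x y)\<^sup>2"
    by (simp add: dist_norm power2_norm_eq_inner inner_diff_left inner_diff_right inner_commute)
  finally show ?thesis
    by (rule power2_le_imp_le) simp
qed

lemma invariant_under_iff_comp_eq:
  assumes "invariant_under G act \<tau>" and "\<And>x. \<tau> x \<in> orbit G act x"
  shows "invariant_under G act \<phi> \<longleftrightarrow> \<phi> \<circ> \<tau> = \<phi>"
proof
  assume \<phi>_inv: "invariant_under G act \<phi>"
  show "\<phi> \<circ> \<tau> = \<phi>"
  proof
    fix x
    obtain s where "s \<in> carrier G" "\<tau> x = act s x"
      using assms(2) unfolding orbit_def by blast
    then show "(\<phi> \<circ> \<tau>) x = \<phi> x"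
      using \<phi>_inv unfolding invariant_under_def by simp
  qed
next
  assume \<phi>_\<tau>: "\<phi> \<circ> \<tau> = \<phi>"
  show "invariant_under G act \<phi>"
    unfolding invariant_under_def
  proof (intro ballI allI)
    fix s x assume "s \<in> carrier G"
    then have "\<tau> (act s x) = \<tau> x"
      using assms(1) unfolding invariant_under_def by blast
    then show "\<phi> (act s x) = \<phi> x"
      using \<phi>_\<tau> by (metis comp_apply)
  qed
qed

lemma sds_norm_gamma:
  assumes "spectral_decomposition_system G act \<gamma> A \<Lambda> \<tau>"
  shows "norm (\<gamma> X) = norm X"
proof -
  obtain a where "a \<in> A" "X = \<Lambda> a (\<gamma> X)"
    using assms unfolding spectral_decomposition_system_def by blast
  with assms show ?thesis
    unfolding spectral_decomposition_system_def lin_isometry_def by metis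
qed

lemma sds_continuous_gamma:
  assumes "spectral_decomposition_system G act \<gamma> A \<Lambda> \<tau>"
  shows "continuous_on UNIV \<gamma>"
proof -
  have "dist (\<gamma> X) (\<gamma> Y) \<le> dist X Y" for X Y
    using sds_norm_gamma[OF assms] assms unfolding spectral_decomposition_system_def
    by (intro dist_le_if_norm_eq_and_inner_le) blast+
  then have "1-lipschitz_on UNIV \<gamma>"
    by (intro lipschitz_onI) auto
  then show ?thesis
    by (rule lipschitz_on_continuous_on)
qed

lemma sds_interior_vimage_eq:
  assumes sds: "spectral_decomposition_system G act \<gamma> A \<Lambda> \<tau>" and "\<tau> -` D = D"
  shows "interior (\<gamma> -` D) = \<gamma> -` interior D"
proof
  show "\<gamma> -` interior D \<subseteq> interior (\<gamma> -` D)"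
    using sds_continuous_gamma[OF sds] by (rule continuous_vimage_interior_subset)
  have "\<exists>L. continuous_on UNIV L \<and> L (\<gamma> X) = X \<and> L -` \<gamma> -` D \<subseteq> D" for X
  proof -
    obtain a where a: "a \<in> A" "\<Lambda> a (\<gamma> X) = X"
      using sds unfolding spectral_decomposition_system_def by (metis (no_types))
    then have "continuous_on UNIV (\<Lambda> a)"
      using sds
      by (simp add: spectral_decomposition_system_def lin_isometry_def
          linear_conv_bounded_linear linear_continuous_on)
    moreover have "\<Lambda> a -` \<gamma> -` D = \<tau> -` D"
      using a(1) sds by (auto simp: spectral_decomposition_system_def simp flip: vimage_comp)
    ultimately show ?thesis
      using a(2) \<open>\<tau> -` D = D\<close> by auto
  qed
  then show "interior (\<gamma> -` D) \<subseteq> \<gamma> -` interior D"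
    by (rule interior_vimage_subset_if_continuous_sections)
qed

theorem proposition4p4:
  fixes G :: "('g, 'm) monoid_scheme" and act :: "'g \<Rightarrow> 'x::euclidean_space \<Rightarrow> 'x"
    and \<gamma> :: "'h::euclidean_space \<Rightarrow> 'x" and A :: "'a set" and \<Lambda> :: "'a \<Rightarrow> 'x \<Rightarrow> 'h"
    and \<tau> :: "'x \<Rightarrow> 'x" and \<phi> :: "'x \<Rightarrow> ereal"
  assumes "spectral_decomposition_system G act \<gamma> A \<Lambda> \<tau>"
  shows "(invariant_under G act \<phi> \<longleftrightarrow> \<phi> \<circ> \<tau> = \<phi>)
       \<and> (\<phi> \<circ> \<tau> = \<phi> \<longleftrightarrow> (\<forall>a\<in>A. \<phi> \<circ> \<gamma> \<circ> \<Lambda> a = \<phi>))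
       \<and> (invariant_under G act \<phi> \<longrightarrow> interior (edom (\<phi> \<circ> \<gamma>)) = \<gamma> -` interior (edom \<phi>))"
proof -
  note sds = assms[unfolded spectral_decomposition_system_def]
  have inv_iff: "invariant_under G act \<phi> \<longleftrightarrow> \<phi> \<circ> \<tau> = \<phi>"
    using sds by (intro invariant_under_iff_comp_eq) blast+
  have "A \<noteq> {}" and "\<And>a. a \<in> A \<Longrightarrow> \<gamma> \<circ> \<Lambda> a = \<tau>"
    using sds by blast+
  then have comp_iff: "\<phi> \<circ> \<tau> = \<phi> \<longleftrightarrow> (\<forall>a\<in>A. \<phi> \<circ> \<gamma> \<circ> \<Lambda> a = \<phi>)"
    by (auto simp: comp_assoc)
  have "interior (edom (\<phi> \<circ> \<gamma>)) = \<gamma> -` interior (edom \<phi>)" if "\<phi> \<circ> \<tau> = \<phi>"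
  proof -
    have "\<tau> -` edom \<phi> = edom (\<phi> \<circ> \<tau>)"
      by (auto simp: edom_def)
    also have "\<dots> = edom \<phi>"
      using that by simp
    finally have "\<tau> -` edom \<phi> = edom \<phi>" .
    moreover have "edom (\<phi> \<circ> \<gamma>) = \<gamma> -` edom \<phi>"
      by (auto simp: edom_def)
    ultimately show ?thesis
      using sds_interior_vimage_eq[OF assms] by simp
  qed
  with inv_iff comp_iff show ?thesis
    by simp
qed

end
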